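(* Assume $X\in\mathbb R^{n\times p}$ ($p>n$) has rank $n$, let $X=UDV^\top$ be its SVD, and define $\tilde{\mathbf y}=D^\dagger U^\top\mathbf y$, $\tilde w=V^\top w$. Then the solution $\hat\theta$ of $\min_\theta\|\theta\|^{3/2}-w^\top\theta$ subject to $\mathbf y=X\theta$ satisfies $$\hat\theta=\hat\theta_{\mathsf{OLS}}+\alpha^\star\,(I-X^\top(XX^\top)^{-1}X)\,w,\qquad \hat\theta_{\mathsf{OLS}}=X^\top(XX^\top)^{-1}\mathbf y,$$ where $$\alpha^\star=\sqrt{\frac{8\|\tilde w_{n+1:p}\|^2+\sqrt{64\|\tilde w_{n+1:p}\|^4+1296\|\tilde{\mathbf y}\|^2}}{81}}.$$
   Context: $w\in\mathbb R^p$ is any fixed vector (in the paper $w=\theta(0)/\sqrt{\|\theta(0)\|}$), $\mathbf y\in\mathbb R^n$. $X=UDV^\top$ with $U\in\mathbb R^{n\times n}$, $V\in\mathbb R^{p\times p}$ orthogonal and $D\in\mathbb R^{n\times p}$ rectangular diagonal with singular values in descending order; $D^\dagger\in\mathbb R^{p\times n}$ its pseudo-inverse. For $v\in\mathbb R^p$, $v_{n+1:p}$ denotes $v$ with its first $n$ coordinates set to zero. *)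

theory Defs
  imports "Jordan_Normal_Form.DL_Rank" "Jordan_Normal_Form.Gauss_Jordan_Elimination"
begin

definition vnorm :: "real vec \<Rightarrow> real" where
  "vnorm v = sqrt (v \<bullet> v)"

(* v_{n+1:p}: v with its first n coordinates set to zero *)
definition tail_vec :: "nat \<Rightarrow> real vec \<Rightarrow> real vec" where
  "tail_vec n v = vec (dim_vec v) (\<lambda>i. if i < n then 0 else v $ i)"

definition rect_diag_desc :: "real mat \<Rightarrow> bool" where
  "rect_diag_desc D \<longleftrightarrow>
     (\<forall>i<dim_row D. \<forall>j<dim_col D. i \<noteq> j \<longrightarrow> D $$ (i,j) = 0) \<and>
     (\<forall>i<min (dim_row D) (dim_col D). D $$ (i,i) \<ge> 0) \<and>
     (\<forall>i j. i \<le> j \<longrightarrow> j < min (dim_row D) (dim_col D) \<longrightarrow> D $$ (j,j) \<le> D $$ (i,i))"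

(* Moore-Penrose pseudo-inverse of a rectangular diagonal matrix
   (note inverse 0 = 0 in Isabelle) *)
definition diag_pinv :: "real mat \<Rightarrow> real mat" where
  "diag_pinv D = mat (dim_col D) (dim_row D)
      (\<lambda>(i,j). if i = j then inverse (D $$ (j,i)) else 0)"

definition orthonormal_mat :: "nat \<Rightarrow> real mat \<Rightarrow> bool" where
  "orthonormal_mat m Q \<longleftrightarrow> Q \<in> carrier_mat m m \<and>
      transpose_mat Q * Q = 1\<^sub>m m \<and> Q * transpose_mat Q = 1\<^sub>m m"

definition objective :: "real vec \<Rightarrow> real vec \<Rightarrow> real" where
  "objective w \<theta> = vnorm \<theta> powr (3/2) - w \<bullet> \<theta>"

definition is_solution :: "real mat \<Rightarrow> real vec \<Rightarrow> real vec \<Rightarrow> real vec \<Rightarrow> bool" where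
  "is_solution X y w \<theta> \<longleftrightarrow> \<theta> \<in> carrier_vec (dim_col X) \<and> X *\<^sub>v \<theta> = y \<and>
     (\<forall>\<theta>'\<in>carrier_vec (dim_col X). X *\<^sub>v \<theta>' = y \<longrightarrow> objective w \<theta> \<le> objective w \<theta>')"

end

theory Submission
  imports Defs
begin

(* The objective ||theta||^(3/2) - w.theta is strictly convex, so a feasible point at which its
   gradient (3/2) ||theta||^(-1/2) theta - w is orthogonal to ker X is the unique minimiser.
   Take theta = theta_OLS + alpha u, where theta_OLS lies in the row space of X and
   u = (I - X^T (X X^T)^-1 X) w is the projection of w onto ker X.  On ker X the gradient
   condition becomes (3/2) ||theta||^(-1/2) alpha = 1, and since
   ||theta||^2 = ||theta_OLS||^2 + alpha^2 ||u||^2 this is the quadratic equation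
   81 alpha^4 / 16 = ||theta_OLS||^2 + alpha^2 ||u||^2 in alpha^2, whose positive root is alpha*.
   The SVD only serves to identify ||theta_OLS|| = ||ytil|| and ||u|| = ||wtil_(n+1:p)||. *)

lemma scalar_prod_self_nonneg: "0 \<le> (v :: real vec) \<bullet> v"
  unfolding scalar_prod_def by (auto intro!: sum_nonneg)

lemma scalar_prod_self_eq_0D:
  assumes "v \<in> carrier_vec p" and "(v :: real vec) \<bullet> v = 0"
  shows "v = 0\<^sub>v p"
proof (rule eq_vecI)
  have "\<forall>i\<in>{0..<dim_vec v}. v $ i * v $ i = 0"
    using assms(2) unfolding scalar_prod_def by (subst sum_nonneg_eq_0_iff[symmetric]) auto
  then show "\<And>i. i < dim_vec (0\<^sub>v p) \<Longrightarrow> v $ i = 0\<^sub>v p $ i" using assms(1) by auto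
qed (use assms in auto)

lemma vnorm_nonneg: "0 \<le> vnorm v"
  unfolding vnorm_def using scalar_prod_self_nonneg by simp

lemma vnorm_power2: "vnorm v ^ 2 = v \<bullet> v"
  unfolding vnorm_def by (rule real_sqrt_pow2[OF scalar_prod_self_nonneg])

lemma vnorm_eq_0D: "v \<in> carrier_vec p \<Longrightarrow> vnorm v = 0 \<Longrightarrow> v = 0\<^sub>v p"
  using scalar_prod_self_eq_0D vnorm_power2 by (metis power_zero_numeral)

lemma scalar_prod_le_vnorm:
  assumes x: "x \<in> carrier_vec p" and y: "y \<in> carrier_vec p"
  shows "(x :: real vec) \<bullet> y \<le> vnorm x * vnorm y"
proof -
  define s t where "s = vnorm y" and "t = vnorm x"
  have xx: "(\<Sum>i<p. x$i * x$i) = t^2" and yy: "(\<Sum>i<p. y$i * y$i) = s^2"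
    and xy: "(\<Sum>i<p. x$i * y$i) = x \<bullet> y"
    using x y unfolding s_def t_def vnorm_power2 scalar_prod_def by (simp_all add: atLeast0LessThan)
  have "0 \<le> (\<Sum>i<p. (s * x$i - t * y$i)^2)" by (intro sum_nonneg) auto
  also have "\<dots> = s^2 * (\<Sum>i<p. x$i * x$i) - 2*s*t * (\<Sum>i<p. x$i * y$i) + t^2 * (\<Sum>i<p. y$i * y$i)"
    by (simp add: power2_eq_square algebra_simps sum.distrib sum_subtractf sum_distrib_left)
  finally have "s * t * (x \<bullet> y) \<le> (s * t) * (s * t)"
    unfolding xx yy xy by (simp add: algebra_simps power2_eq_square)
  moreover have "s = 0 \<or> t = 0 \<Longrightarrow> x \<bullet> y = 0"
    using vnorm_eq_0D[OF x] vnorm_eq_0D[OF y] x y unfolding s_def t_def by auto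
  ultimately show ?thesis
    using vnorm_nonneg[of x] vnorm_nonneg[of y] unfolding s_def t_def
    by (smt (verit) mult_le_cancel_left_pos mult_nonneg_nonneg mult.commute)
qed

lemma eq_if_scalar_prod_eq:
  assumes \<theta>: "\<theta> \<in> carrier_vec p" and t: "t \<in> carrier_vec p"
    and "\<theta> \<bullet> \<theta> = t \<bullet> t" and "t \<bullet> \<theta> = (t \<bullet> t :: real)"
  shows "\<theta> = t"
proof -
  have "(\<theta> - t) \<bullet> (\<theta> - t) = \<theta> \<bullet> \<theta> - 2 * (t \<bullet> \<theta>) + t \<bullet> t"
    using \<theta> t by (simp add: scalar_prod_minus_distrib[of _ p] minus_scalar_prod_distrib[of _ p]
        comm_scalar_prod[of \<theta> p t])
  then have "\<theta> - t = 0\<^sub>v p"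
    using assms(3,4) scalar_prod_self_eq_0D[of "\<theta> - t" p] \<theta> t by simp
  then have "\<theta> $ i = t $ i" if "i < p" for i
    using that t by (metis index_minus_vec(1) index_zero_vec(1) carrier_vecD right_minus_eq)
  then show ?thesis using \<theta> t by (intro eq_vecI) auto
qed

lemma mult_mat_vec_zero: "A \<in> carrier_mat r c \<Longrightarrow> A *\<^sub>v 0\<^sub>v c = (0\<^sub>v r :: real vec)"
  by (intro eq_vecI) (auto simp: scalar_prod_def)

lemma smult_zero_vec: "a \<cdot>\<^sub>v 0\<^sub>v n = (0\<^sub>v n :: real vec)"
  by (intro eq_vecI) auto

lemma mult_mat_vec_right_inverse:
  assumes "A \<in> carrier_mat r m" and "B \<in> carrier_mat m r" and "A * B = 1\<^sub>m r"
    and "(x :: real vec) \<in> carrier_vec r"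
  shows "A *\<^sub>v (B *\<^sub>v x) = x"
  using assms by (metis assoc_mult_mat_vec one_mult_mat_vec)

lemma orthonormal_mat_mult_vec:
  assumes "orthonormal_mat m Q" and "(x :: real vec) \<in> carrier_vec m"
  shows "transpose_mat Q *\<^sub>v (Q *\<^sub>v x) = x" and "Q *\<^sub>v (transpose_mat Q *\<^sub>v x) = x"
  using assms mult_mat_vec_right_inverse[of _ m m] unfolding orthonormal_mat_def by auto

lemma vnorm_orthonormal_mult:
  assumes "orthonormal_mat p V" and x: "(x :: real vec) \<in> carrier_vec p"
  shows "vnorm (V *\<^sub>v x) = vnorm x"
proof -
  have V: "V \<in> carrier_mat p p" using assms(1) unfolding orthonormal_mat_def by simp
  have "(V *\<^sub>v x) \<bullet> (V *\<^sub>v x) = (transpose_mat V *\<^sub>v (V *\<^sub>v x)) \<bullet> x"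
    using transpose_vec_mult_scalar[OF V x] V x by simp
  then show ?thesis unfolding vnorm_def orthonormal_mat_mult_vec(1)[OF assms] by simp
qed

lemma transpose_mult_vec_orthogonal_kernel:
  assumes "X \<in> carrier_mat n p" and "v \<in> carrier_vec n" and "z \<in> carrier_vec p"
    and "X *\<^sub>v z = 0\<^sub>v n"
  shows "(transpose_mat X *\<^sub>v v) \<bullet> z = (0 :: real)"
  using assms transpose_vec_mult_scalar[OF assms(1,3,2)] by (simp add: scalar_prod_def)

lemma powr_three_halves: "0 \<le> (x :: real) \<Longrightarrow> x powr (3/2) = sqrt x ^ 3"
proof (cases "x = 0")
  case False
  assume "0 \<le> x"
  have "x powr (3/2) = x powr (1 + 1/2)" by simp
  also have "\<dots> = x powr 1 * x powr (1/2)" by (rule powr_add)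
  also have "\<dots> = sqrt x ^ 3"
    using False \<open>0 \<le> x\<close> by (simp add: powr_half_sqrt power3_eq_cube)
  finally show ?thesis .
qed simp

lemma cubic_tangent_gap:
  fixes m r c :: real
  assumes r: "0 < r" and m: "0 \<le> m" and c: "c \<le> r^2 * m^2"
  shows "0 \<le> m^3 - r^3 - 3/(2*r) * (c - r^4)"
    and "m^3 - r^3 - 3/(2*r) * (c - r^4) \<le> 0 \<Longrightarrow> m = r \<and> c = r^2 * m^2"
proof -
  have gap: "m^3 - r^3 - 3/(2*r) * (c - r^4) = (m - r)^2 * (m + r/2) + 3/(2*r) * (r^2*m^2 - c)"
    using r by (simp add: field_simps power2_eq_square power3_eq_cube)
      (simp add: algebra_simps power4_eq_xxxx)
  have sq: "0 \<le> (m - r)^2 * (m + r/2)" and lin: "0 \<le> 3/(2*r) * (r^2*m^2 - c)"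
    using r m c by simp_all
  then show "0 \<le> m^3 - r^3 - 3/(2*r) * (c - r^4)" unfolding gap by linarith
  assume "m^3 - r^3 - 3/(2*r) * (c - r^4) \<le> 0"
  then have "(m - r)^2 * (m + r/2) = 0" and "3/(2*r) * (r^2*m^2 - c) = 0"
    using sq lin unfolding gap by linarith+
  then show "m = r \<and> c = r^2 * m^2" using r m by auto
qed

(* At theta = 0 the coefficient is 3 / (2 * 0) = 0, the correct gradient at the origin. *)
definition norm_three_halves_grad :: "real vec \<Rightarrow> real vec" where
  "norm_three_halves_grad \<theta> = (3 / (2 * sqrt (vnorm \<theta>))) \<cdot>\<^sub>v \<theta>"

lemma norm_three_halves_gradient_ineq:
  assumes \<theta>: "\<theta> \<in> carrier_vec p" and t: "t \<in> carrier_vec p"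
  shows "0 \<le> vnorm \<theta> powr (3/2) - vnorm t powr (3/2) - norm_three_halves_grad t \<bullet> (\<theta> - t)"
    and "vnorm \<theta> powr (3/2) - vnorm t powr (3/2) - norm_three_halves_grad t \<bullet> (\<theta> - t) \<le> 0
         \<Longrightarrow> \<theta> = t"
proof -
  define gap where "gap = vnorm \<theta> powr (3/2) - vnorm t powr (3/2) - norm_three_halves_grad t \<bullet> (\<theta> - t)"
  define m where "m = sqrt (vnorm \<theta>)"
  have m: "0 \<le> m" and \<theta>m: "\<theta> \<bullet> \<theta> = (m^2)^2"
    unfolding m_def using vnorm_nonneg[of \<theta>] by (simp_all add: vnorm_power2)
  have "0 \<le> gap \<and> (gap \<le> 0 \<longrightarrow> \<theta> = t)"
  proof (cases "t = 0\<^sub>v p")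
    case True
    then have "gap = m^3"
      unfolding gap_def m_def norm_three_halves_grad_def
      using \<theta> powr_three_halves[OF vnorm_nonneg] by (simp add: vnorm_def)
    moreover have "\<theta> = t" if "m^3 \<le> 0"
    proof -
      have "m = 0" using m that by (metis le_less not_le zero_less_power)
      then have "vnorm \<theta> = 0" unfolding m_def by simp
      then show ?thesis using vnorm_eq_0D[OF \<theta>] True by simp
    qed
    ultimately show ?thesis using m by simp
  next
    case False
    define r where "r = sqrt (vnorm t)"
    have r: "0 < r"
      unfolding r_def using False vnorm_eq_0D[OF t] vnorm_nonneg[of t] by (auto simp: less_le)
    have "r^2 = vnorm t" unfolding r_def using vnorm_nonneg[of t] by simp
    then have "t \<bullet> t = (r^2)^2" using vnorm_power2[of t] by simp
    then have tr: "t \<bullet> t = r^4" by (simp add: power4_eq_xxxx power2_eq_square)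
    define c where "c = t \<bullet> \<theta>"
    have c: "c \<le> r^2 * m^2"
      unfolding c_def r_def m_def using scalar_prod_le_vnorm[OF t \<theta>] vnorm_nonneg[of t] vnorm_nonneg[of \<theta>]
      by simp
    have "norm_three_halves_grad t \<bullet> (\<theta> - t) = 3/(2*r) * (c - r^4)"
      unfolding norm_three_halves_grad_def c_def r_def[symmetric] tr[symmetric]
      using t \<theta> by (simp add: scalar_prod_minus_distrib[OF t \<theta> t])
    then have gap: "gap = m^3 - r^3 - 3/(2*r) * (c - r^4)"
      unfolding gap_def m_def r_def using powr_three_halves[OF vnorm_nonneg] by simp
    have "\<theta> = t" if "m = r" and "c = r^2 * m^2"
      using eq_if_scalar_prod_eq[OF \<theta> t] that \<theta>m tr unfolding c_def
      by (simp add: power4_eq_xxxx power2_eq_square)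
    then show ?thesis unfolding gap using cubic_tangent_gap[OF r m c] by auto
  qed
  then show "0 \<le> gap" and "gap \<le> 0 \<Longrightarrow> \<theta> = t" by auto
qed

lemma is_solution_unique_if_first_order:
  assumes X: "X \<in> carrier_mat n p" and w: "w \<in> carrier_vec p" and t: "t \<in> carrier_vec p"
    and Xt: "X *\<^sub>v t = y"
    and grad: "\<And>z. z \<in> carrier_vec p \<Longrightarrow> X *\<^sub>v z = 0\<^sub>v n \<Longrightarrow>
                 w \<bullet> z = norm_three_halves_grad t \<bullet> z"
  shows "is_solution X y w t \<and> (\<forall>\<theta>. is_solution X y w \<theta> \<longrightarrow> \<theta> = t)"
proof -
  have gap: "objective w t \<le> objective w \<theta> \<and> (objective w \<theta> \<le> objective w t \<longrightarrow> \<theta> = t)"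
    if \<theta>: "\<theta> \<in> carrier_vec p" and X\<theta>: "X *\<^sub>v \<theta> = y" for \<theta>
  proof -
    have "X *\<^sub>v (\<theta> - t) = 0\<^sub>v n"
      using mult_minus_distrib_mat_vec[OF X \<theta> t] X\<theta> Xt X t by (metis minus_cancel_vec mult_mat_vec_carrier)
    then have "w \<bullet> (\<theta> - t) = norm_three_halves_grad t \<bullet> (\<theta> - t)"
      using grad \<theta> t by simp
    then have "objective w \<theta> - objective w t =
        vnorm \<theta> powr (3/2) - vnorm t powr (3/2) - norm_three_halves_grad t \<bullet> (\<theta> - t)"
      unfolding objective_def using scalar_prod_minus_distrib[OF w \<theta> t] by simp
    then show ?thesis using norm_three_halves_gradient_ineq[OF \<theta> t] by auto
  qed
  show ?thesis
    unfolding is_solution_def using gap X t Xt by (metis carrier_matD(2))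
qed

lemma alpha_star_quartic:
  assumes "\<alpha> = sqrt ((8 * a^2 + sqrt (64 * a^4 + 1296 * b^2)) / 81)"
  shows "81/16 * \<alpha>^4 = b^2 + \<alpha>^2 * a^2"
proof -
  define S where "S = sqrt (64 * a^4 + 1296 * b^2)"
  have "0 \<le> S" unfolding S_def by simp
  then have "81 * \<alpha>^2 - 8 * a^2 = S" unfolding assms S_def[symmetric] by (simp add: field_simps)
  then have "(81 * \<alpha>^2 - 8 * a^2)^2 = 64 * a^4 + 1296 * b^2" unfolding S_def by simp
  then show ?thesis by (simp add: power2_eq_square power4_eq_xxxx algebra_simps)
qed

lemma norm_three_halves_grad_alpha_star:
  assumes t0: "t0 \<in> carrier_vec p" and u: "u \<in> carrier_vec p" and z: "z \<in> carrier_vec p"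
    and t0u: "t0 \<bullet> u = 0" and t0z: "t0 \<bullet> z = 0"
    and \<alpha>: "\<alpha> = sqrt ((8 * vnorm u ^ 2 + sqrt (64 * vnorm u ^ 4 + 1296 * vnorm t0 ^ 2)) / 81)"
  shows "norm_three_halves_grad (t0 + \<alpha> \<cdot>\<^sub>v u) \<bullet> z = u \<bullet> z"
proof -
  define c where "c = 3 / (2 * sqrt (vnorm (t0 + \<alpha> \<cdot>\<^sub>v u)))"
  have "norm_three_halves_grad (t0 + \<alpha> \<cdot>\<^sub>v u) \<bullet> z = c * \<alpha> * (u \<bullet> z)"
    unfolding norm_three_halves_grad_def c_def[symmetric] using t0 u z t0z
    by (simp add: add_scalar_prod_distrib[of _ p])
  moreover have "c * \<alpha> = 1" if "u \<noteq> 0\<^sub>v p"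
  proof -
    define a where "a = vnorm u"
    have "0 < a" unfolding a_def using that vnorm_eq_0D[OF u] vnorm_nonneg[of u] by (auto simp: less_le)
    then have \<alpha>_pos: "0 < \<alpha>" unfolding \<alpha> a_def[symmetric] by (simp add: add_pos_nonneg)
    have "(t0 + \<alpha> \<cdot>\<^sub>v u) \<bullet> (t0 + \<alpha> \<cdot>\<^sub>v u) = vnorm t0 ^ 2 + \<alpha>^2 * a^2"
      unfolding a_def vnorm_power2 using t0 u t0u
      by (simp add: add_scalar_prod_distrib[of _ p] scalar_prod_add_distrib[of _ p]
          comm_scalar_prod[of u p t0] power2_eq_square)
    also have "\<dots> = 81/16 * \<alpha>^4" using alpha_star_quartic[OF \<alpha>[folded a_def]] by simp
    also have "\<dots> = ((3/2 * \<alpha>)^2)^2" by (simp add: power_mult_distrib power_divide)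
    finally have "vnorm (t0 + \<alpha> \<cdot>\<^sub>v u) = (3/2 * \<alpha>)^2"
      unfolding vnorm_def by (simp only: real_sqrt_abs abs_power2)
    then show ?thesis unfolding c_def using \<alpha>_pos by simp
  qed
  ultimately show ?thesis using u z by (cases "u = 0\<^sub>v p") auto
qed

lemma full_row_rank_transpose_mult_vec_eq_0D:
  fixes X :: "real mat"
  assumes X: "X \<in> carrier_mat n p" and rk: "vec_space.rank n X = n"
    and v: "v \<in> carrier_vec n" and Xv: "transpose_mat X *\<^sub>v v = 0\<^sub>v p"
  shows "v = 0\<^sub>v n"
proof -
  interpret vec_space "TYPE(real)" n .
  obtain S where max: "maximal S (\<lambda>T. T \<subseteq> set (cols X) \<and> lin_indpt T)"
    using maximal_exists[of "\<lambda>T. T \<subseteq> set (cols X) \<and> lin_indpt T" "card (set (cols X))" "{}"]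
    by (meson List.finite_set card_mono empty_iff empty_subsetI finite_lin_indpt2 rev_finite_subset)
  have SX: "S \<subseteq> set (cols X)" and li: "lin_indpt S" using max unfolding maximal_def by auto
  obtain xs where xs: "set xs = S" "distinct xs"
    using finite_distinct_list[OF finite_subset[OF SX]] by blast
  have lxs: "length xs = n"
    using xs rank_card_indpt[OF X max] rk distinct_card by fastforce
  have xs_carrier: "set xs \<subseteq> carrier_vec n" using xs SX cols_dim X by fastforce
  define A where "A = mat_of_cols n xs"
  have A: "A \<in> carrier_mat n n" unfolding A_def using lxs by (metis mat_of_cols_carrier(1))
  have "rank A = n"
    using lin_indpt_full_rank[OF A] xs li xs_carrier unfolding A_def by simp
  then have det: "det (transpose_mat A) \<noteq> 0"
    using det_rank_iff[OF A] det_transpose[OF A] by simp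
  have "transpose_mat A *\<^sub>v v = 0\<^sub>v n"
  proof (rule eq_vecI)
    fix j assume "j < dim_vec (0\<^sub>v n)"
    then have j: "j < n" by simp
    have "xs ! j \<in> set (cols X)" using j lxs xs SX by auto
    then obtain k where k: "k < p" "xs ! j = col X k" using X
      by (metis cols_length cols_nth in_set_conv_nth carrier_matD(2))
    have "col A j = xs ! j" unfolding A_def using j lxs xs_carrier by (simp add: subset_code(1))
    then have "(transpose_mat A *\<^sub>v v) $ j = (transpose_mat X *\<^sub>v v) $ k"
      using A X j k by simp
    then show "(transpose_mat A *\<^sub>v v) $ j = 0\<^sub>v n $ j" using Xv k j by simp
  qed (use A in simp)
  then show ?thesis
    using det_0_iff_vec_prod_zero_field[of "transpose_mat A"] A det v by auto
qed

lemma full_row_rank_gram_invertible: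
  fixes X :: "real mat"
  assumes X: "X \<in> carrier_mat n p" and rk: "vec_space.rank n X = n"
  obtains G where "mat_inverse (X * transpose_mat X) = Some G"
proof -
  have XX: "X * transpose_mat X \<in> carrier_mat n n" using X by simp
  have "det (X * transpose_mat X) \<noteq> 0"
  proof
    assume "det (X * transpose_mat X) = 0"
    then obtain v where v: "v \<in> carrier_vec n" "v \<noteq> 0\<^sub>v n" "(X * transpose_mat X) *\<^sub>v v = 0\<^sub>v n"
      using det_0_iff_vec_prod_zero_field[OF XX] by blast
    have Xv: "transpose_mat X *\<^sub>v v \<in> carrier_vec p" using X v by simp
    have "(transpose_mat X *\<^sub>v v) \<bullet> (transpose_mat X *\<^sub>v v) = v \<bullet> ((X * transpose_mat X) *\<^sub>v v)"
      using transpose_vec_mult_scalar[OF X Xv v(1)] X v by simp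
    also have "\<dots> = 0" using v by simp
    finally show False
      using full_row_rank_transpose_mult_vec_eq_0D[OF X rk v(1)] scalar_prod_self_eq_0D[OF Xv] v(2)
      by simp
  qed
  note unit = det_non_zero_imp_unit[OF XX this, of "()"]
  show ?thesis
  proof (cases "mat_inverse (X * transpose_mat X)")
    case None
    then show ?thesis using mat_inverse(1)[OF XX None, of "()"] unit by simp
  qed (rule that)
qed

lemma gram_left_inverse_row_space:
  fixes X G :: "real mat"
  assumes X: "X \<in> carrier_mat n p" and G: "G \<in> carrier_mat n n"
    and GXX: "G * (X * transpose_mat X) = 1\<^sub>m n" and g: "g \<in> carrier_vec n"
  shows "transpose_mat X *\<^sub>v (G *\<^sub>v (X *\<^sub>v (transpose_mat X *\<^sub>v g))) = transpose_mat X *\<^sub>v g"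
proof -
  have "X *\<^sub>v (transpose_mat X *\<^sub>v g) = (X * transpose_mat X) *\<^sub>v g" using X g by simp
  then show ?thesis using mult_mat_vec_right_inverse[OF G _ GXX g] X by simp
qed

lemma projection_mult_vec:
  fixes X G :: "real mat"
  assumes X: "X \<in> carrier_mat n p" and G: "G \<in> carrier_mat n n" and w: "w \<in> carrier_vec p"
  shows "(1\<^sub>m p - transpose_mat X * G * X) *\<^sub>v w = w - transpose_mat X *\<^sub>v (G *\<^sub>v (X *\<^sub>v w))"
proof -
  have "(transpose_mat X * G * X) *\<^sub>v w = (transpose_mat X * G) *\<^sub>v (X *\<^sub>v w)"
    using X G w by (intro assoc_mult_mat_vec) auto
  also have "\<dots> = transpose_mat X *\<^sub>v (G *\<^sub>v (X *\<^sub>v w))"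
    using X G w by (intro assoc_mult_mat_vec) auto
  finally show ?thesis
    using X G w by (simp add: minus_mult_distrib_mat_vec[of _ p p])
qed

lemma min_norm_plus_alpha_projection_unique_solution:
  fixes X G :: "real mat"
  assumes X: "X \<in> carrier_mat n p" and G: "G \<in> carrier_mat n n"
    and XXG: "(X * transpose_mat X) * G = 1\<^sub>m n"
    and y: "y \<in> carrier_vec n" and w: "w \<in> carrier_vec p"
    and t0: "t0 = transpose_mat X *\<^sub>v (G *\<^sub>v y)"
    and u: "u = (1\<^sub>m p - transpose_mat X * G * X) *\<^sub>v w"
    and \<alpha>: "\<alpha> = sqrt ((8 * vnorm u ^ 2 + sqrt (64 * vnorm u ^ 4 + 1296 * vnorm t0 ^ 2)) / 81)"
  shows "is_solution X y w (t0 + \<alpha> \<cdot>\<^sub>v u) \<and> (\<forall>\<theta>. is_solution X y w \<theta> \<longrightarrow> \<theta> = t0 + \<alpha> \<cdot>\<^sub>v u)"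
proof -
  have XXGv: "X *\<^sub>v (transpose_mat X *\<^sub>v (G *\<^sub>v v)) = v" if v: "v \<in> carrier_vec n" for v
  proof -
    have "X *\<^sub>v (transpose_mat X *\<^sub>v (G *\<^sub>v v)) = (X * transpose_mat X) *\<^sub>v (G *\<^sub>v v)"
      using X G v by simp
    then show ?thesis using mult_mat_vec_right_inverse[OF _ G XXG v] X by simp
  qed
  define r where "r = transpose_mat X *\<^sub>v (G *\<^sub>v (X *\<^sub>v w))"
  have t0_carrier: "t0 \<in> carrier_vec p" and r_carrier: "r \<in> carrier_vec p"
    unfolding t0 r_def using X G y w by auto
  have u_r: "u = w - r"
    unfolding u r_def by (rule projection_mult_vec[OF X G w])
  have u_carrier: "u \<in> carrier_vec p" using u_r w r_carrier by simp
  have Xu: "X *\<^sub>v u = 0\<^sub>v n"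
    unfolding u_r using mult_minus_distrib_mat_vec[OF X w r_carrier] XXGv[of "X *\<^sub>v w"] X w
    unfolding r_def by simp
  have orth_t0: "t0 \<bullet> z = 0" and orth_r: "r \<bullet> z = 0"
    if "z \<in> carrier_vec p" and "X *\<^sub>v z = 0\<^sub>v n" for z
    unfolding t0 r_def using transpose_mult_vec_orthogonal_kernel[OF X _ that] X G y w by auto
  have Xt0: "X *\<^sub>v t0 = y" unfolding t0 using XXGv[OF y] .
  show ?thesis
  proof (rule is_solution_unique_if_first_order[OF X w])
    show "t0 + \<alpha> \<cdot>\<^sub>v u \<in> carrier_vec p" using t0_carrier u_carrier by simp
    show "X *\<^sub>v (t0 + \<alpha> \<cdot>\<^sub>v u) = y"
      using Xt0 Xu X t0_carrier u_carrier y smult_zero_vec[of \<alpha> n]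
      by (simp add: mult_add_distrib_mat_vec[of _ n p] mult_mat_vec[of _ n p])
    fix z assume z: "z \<in> carrier_vec p" and Xz: "X *\<^sub>v z = 0\<^sub>v n"
    have "w \<bullet> z = u \<bullet> z"
      unfolding u_r using minus_scalar_prod_distrib[OF w r_carrier z] orth_r[OF z Xz] by simp
    also have "\<dots> = norm_three_halves_grad (t0 + \<alpha> \<cdot>\<^sub>v u) \<bullet> z"
      using norm_three_halves_grad_alpha_star[OF t0_carrier u_carrier z _ orth_t0[OF z Xz] \<alpha>]
        orth_t0[OF u_carrier Xu] by simp
    finally show "w \<bullet> z = norm_three_halves_grad (t0 + \<alpha> \<cdot>\<^sub>v u) \<bullet> z" .
  qed
qed

lemma diag_mult_vec_nth:
  assumes M: "M \<in> carrier_mat r c" and v: "v \<in> carrier_vec c"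
    and diag: "\<And>i j. i < r \<Longrightarrow> j < c \<Longrightarrow> i \<noteq> j \<Longrightarrow> M $$ (i,j) = 0" and i: "i < r"
  shows "(M *\<^sub>v v) $ i = (if i < c then M $$ (i,i) * v $ i else (0 :: real))"
proof -
  have "(M *\<^sub>v v) $ i = (\<Sum>j\<in>{0..<c}. M $$ (i,j) * v $ j)"
    using M v i by (simp add: scalar_prod_def)
  also have "\<dots> = (\<Sum>j\<in>{0..<c}. if j = i then M $$ (i,i) * v $ i else 0)"
    using diag i by (intro sum.cong) auto
  finally show ?thesis by simp
qed

(* Only the vanishing off-diagonal entries of D are used; the sign and ordering of the singular
   values play no role. *)
locale full_row_rank_svd =
  fixes n p :: nat and X U D V :: "real mat"
  assumes n_le_p: "n \<le> p"
    and X_carrier: "X \<in> carrier_mat n p" and rank_X: "vec_space.rank n X = n"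
    and U: "orthonormal_mat n U" and V: "orthonormal_mat p V"
    and D_carrier: "D \<in> carrier_mat n p"
    and D_diag: "\<And>i j. i < n \<Longrightarrow> j < p \<Longrightarrow> i \<noteq> j \<Longrightarrow> D $$ (i,j) = 0"
    and X_svd: "X = U * D * transpose_mat V"
begin

lemma U_carrier: "U \<in> carrier_mat n n" and V_carrier: "V \<in> carrier_mat p p"
  using U V unfolding orthonormal_mat_def by auto

lemma X_mult_vec: "x \<in> carrier_vec p \<Longrightarrow> X *\<^sub>v x = U *\<^sub>v (D *\<^sub>v (transpose_mat V *\<^sub>v x))"
proof -
  assume x: "x \<in> carrier_vec p"
  have "X *\<^sub>v x = (U * D) *\<^sub>v (transpose_mat V *\<^sub>v x)"
    unfolding X_svd using U_carrier D_carrier V_carrier x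
    by (subst assoc_mult_mat_vec[of _ n p _ p]) auto
  then show ?thesis using U_carrier D_carrier V_carrier x by simp
qed

lemma X_transpose_mult_vec:
  "x \<in> carrier_vec n \<Longrightarrow> transpose_mat X *\<^sub>v x = V *\<^sub>v (transpose_mat D *\<^sub>v (transpose_mat U *\<^sub>v x))"
proof -
  assume x: "x \<in> carrier_vec n"
  have "transpose_mat X = V * transpose_mat (U * D)"
    unfolding X_svd using transpose_mult[of "U * D" n p "transpose_mat V" p] U_carrier D_carrier V_carrier
    by simp
  also have "transpose_mat (U * D) = transpose_mat D * transpose_mat U"
    using transpose_mult[of U n n D p] U_carrier D_carrier by simp
  finally have "transpose_mat X *\<^sub>v x = V *\<^sub>v ((transpose_mat D * transpose_mat U) *\<^sub>v x)"
    using U_carrier D_carrier V_carrier x by (simp add: assoc_mult_mat_vec[of V p p _ n])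
  then show ?thesis using U_carrier D_carrier x by simp
qed

lemma D_mult_vec_nth: "x \<in> carrier_vec p \<Longrightarrow> i < n \<Longrightarrow> (D *\<^sub>v x) $ i = D $$ (i,i) * x $ i"
  using diag_mult_vec_nth[OF D_carrier _ D_diag] n_le_p by auto

lemma D_transpose_mult_vec_nth:
  "x \<in> carrier_vec n \<Longrightarrow> i < p \<Longrightarrow>
     (transpose_mat D *\<^sub>v x) $ i = (if i < n then D $$ (i,i) * x $ i else 0)"
  using diag_mult_vec_nth[of "transpose_mat D" p n x i] D_carrier D_diag by auto

lemma diag_pinv_carrier: "diag_pinv D \<in> carrier_mat p n"
  unfolding diag_pinv_def using D_carrier by auto

lemma diag_pinv_mult_vec_nth:
  "x \<in> carrier_vec n \<Longrightarrow> i < p \<Longrightarrow>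
     (diag_pinv D *\<^sub>v x) $ i = (if i < n then inverse (D $$ (i,i)) * x $ i else 0)"
  using diag_mult_vec_nth[OF diag_pinv_carrier, of x i] D_carrier
  unfolding diag_pinv_def by auto

lemma singular_value_nonzero:
  assumes k: "k < n"
  shows "D $$ (k,k) \<noteq> 0"
proof
  assume "D $$ (k,k) = 0"
  define e :: "real vec" where "e = unit_vec n k"
  have e: "e \<in> carrier_vec n" unfolding e_def by simp
  have "transpose_mat D *\<^sub>v e = 0\<^sub>v p"
    using D_transpose_mult_vec_nth[OF e] \<open>D $$ (k,k) = 0\<close> D_carrier k
    unfolding e_def by (intro eq_vecI) auto
  then have "transpose_mat X *\<^sub>v (U *\<^sub>v e) = 0\<^sub>v p"
    using X_transpose_mult_vec[of "U *\<^sub>v e"] orthonormal_mat_mult_vec(1)[OF U e]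
      U_carrier V_carrier e mult_mat_vec_zero by simp
  then have "U *\<^sub>v e = 0\<^sub>v n"
    using full_row_rank_transpose_mult_vec_eq_0D[OF X_carrier rank_X] U_carrier e by simp
  then have "e = 0\<^sub>v n"
    using orthonormal_mat_mult_vec(1)[OF U e] mult_mat_vec_zero[of "transpose_mat U"] U_carrier by simp
  then show False using k unfolding e_def by (metis index_unit_vec(1) index_zero_vec(1) zero_neq_one)
qed

lemma head_in_row_space:
  assumes h: "h \<in> carrier_vec p" and head: "\<And>i. n \<le> i \<Longrightarrow> i < p \<Longrightarrow> h $ i = 0"
  shows "V *\<^sub>v h = transpose_mat X *\<^sub>v (U *\<^sub>v vec n (\<lambda>i. h $ i / D $$ (i,i)))"
proof -
  define e where "e = vec n (\<lambda>i. h $ i / D $$ (i,i))"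
  have e: "e \<in> carrier_vec n" unfolding e_def by simp
  have "transpose_mat D *\<^sub>v e = h"
    using D_transpose_mult_vec_nth[OF e] singular_value_nonzero head h D_carrier
    unfolding e_def by (intro eq_vecI) auto
  then show ?thesis
    unfolding e_def[symmetric] using X_transpose_mult_vec orthonormal_mat_mult_vec(1)[OF U e]
      U_carrier e by simp
qed

context
  fixes G :: "real mat"
  assumes G_carrier: "G \<in> carrier_mat n n"
    and G_left_inverse: "G * (X * transpose_mat X) = 1\<^sub>m n"
begin

lemma gram_inverse_fixes_head:
  assumes h: "h \<in> carrier_vec p" and head: "\<And>i. n \<le> i \<Longrightarrow> i < p \<Longrightarrow> h $ i = 0"
  shows "transpose_mat X *\<^sub>v (G *\<^sub>v (X *\<^sub>v (V *\<^sub>v h))) = V *\<^sub>v h"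
proof -
  define e where "e = vec n (\<lambda>i. h $ i / D $$ (i,i))"
  have "U *\<^sub>v e \<in> carrier_vec n" unfolding e_def using U_carrier by simp
  then show ?thesis
    using head_in_row_space[OF h head] gram_left_inverse_row_space[OF X_carrier G_carrier G_left_inverse]
    unfolding e_def by simp
qed

lemma min_norm_solution_eq_pinv:
  assumes y: "y \<in> carrier_vec n"
  shows "transpose_mat X *\<^sub>v (G *\<^sub>v y) = V *\<^sub>v (diag_pinv D *\<^sub>v (transpose_mat U *\<^sub>v y))"
proof -
  define c where "c = transpose_mat U *\<^sub>v y"
  define h where "h = diag_pinv D *\<^sub>v c"
  have c: "c \<in> carrier_vec n" and h: "h \<in> carrier_vec p"
    unfolding c_def h_def using U_carrier diag_pinv_carrier y by auto
  have head: "h $ i = 0" if "n \<le> i" "i < p" for i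
    unfolding h_def using diag_pinv_mult_vec_nth[OF c] that by simp
  have "D *\<^sub>v h = c"
    unfolding h_def using D_mult_vec_nth diag_pinv_mult_vec_nth[OF c] singular_value_nonzero
      c diag_pinv_carrier D_carrier n_le_p by (intro eq_vecI) auto
  then have "X *\<^sub>v (V *\<^sub>v h) = y"
    using X_mult_vec orthonormal_mat_mult_vec[OF V h] orthonormal_mat_mult_vec(2)[OF U y]
      V_carrier h unfolding c_def by simp
  then show ?thesis
    using gram_inverse_fixes_head[OF h head] unfolding h_def c_def by simp
qed

lemma projection_eq_tail:
  assumes w: "w \<in> carrier_vec p"
  shows "(1\<^sub>m p - transpose_mat X * G * X) *\<^sub>v w = V *\<^sub>v tail_vec n (transpose_mat V *\<^sub>v w)"
proof -
  define q where "q = transpose_mat V *\<^sub>v w"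
  define h :: "real vec" where "h = vec p (\<lambda>i. if i < n then q $ i else 0)"
  have q: "q \<in> carrier_vec p" and h: "h \<in> carrier_vec p" and tail: "tail_vec n q \<in> carrier_vec p"
    unfolding q_def h_def tail_vec_def using V_carrier w by auto
  have q_split: "q = h + tail_vec n q"
    using q unfolding h_def tail_vec_def by (intro eq_vecI) auto
  have "D *\<^sub>v tail_vec n q = 0\<^sub>v n"
    using D_mult_vec_nth[OF tail] D_carrier q n_le_p unfolding tail_vec_def by (intro eq_vecI) auto
  then have "D *\<^sub>v q = D *\<^sub>v h"
    using q_split mult_add_distrib_mat_vec[OF D_carrier h tail] D_carrier h by simp
  then have "X *\<^sub>v (V *\<^sub>v h) = X *\<^sub>v w"
    using X_mult_vec orthonormal_mat_mult_vec(1)[OF V h] V_carrier h w unfolding q_def by simp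
  then have "transpose_mat X *\<^sub>v (G *\<^sub>v (X *\<^sub>v w)) = V *\<^sub>v h"
    using gram_inverse_fixes_head[OF h] unfolding h_def by simp
  moreover have "w = V *\<^sub>v h + V *\<^sub>v tail_vec n q"
    using orthonormal_mat_mult_vec(2)[OF V w] q_split mult_add_distrib_mat_vec[OF V_carrier h tail]
    unfolding q_def by simp
  ultimately show ?thesis
    unfolding q_def[symmetric] projection_mult_vec[OF X_carrier G_carrier w]
    using V_carrier h tail by (intro eq_vecI) auto
qed

end

end

theorem mainTheorem4:
  fixes n p :: nat and X U D V :: "real mat" and y w :: "real vec"
  assumes "p > n"
    and "X \<in> carrier_mat n p"
    and "vec_space.rank n X = n"
    and "orthonormal_mat n U" and "orthonormal_mat p V"
    and "D \<in> carrier_mat n p" and "rect_diag_desc D"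
    and "X = U * D * transpose_mat V"
    and "y \<in> carrier_vec n" and "w \<in> carrier_vec p"
  shows "let ytil = diag_pinv D *\<^sub>v (transpose_mat U *\<^sub>v y);
             wtil = transpose_mat V *\<^sub>v w;
             a = vnorm (tail_vec n wtil); b = vnorm ytil;
             alpha = sqrt ((8 * a ^ 2 + sqrt (64 * a ^ 4 + 1296 * b ^ 2)) / 81);
             G = the (mat_inverse (X * transpose_mat X));
             thOLS = transpose_mat X *\<^sub>v (G *\<^sub>v y);
             th = thOLS + alpha \<cdot>\<^sub>v ((1\<^sub>m p - transpose_mat X * G * X) *\<^sub>v w)
         in is_solution X y w th \<and> (\<forall>\<theta>. is_solution X y w \<theta> \<longrightarrow> \<theta> = th)"
proof -
  note y = assms(9) and w = assms(10)
  interpret full_row_rank_svd n p X U D V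
    using assms(1-6,8) assms(7)[unfolded rect_diag_desc_def] by unfold_locales auto
  obtain G where G: "mat_inverse (X * transpose_mat X) = Some G"
    using full_row_rank_gram_invertible[OF X_carrier rank_X] .
  have G_carrier: "G \<in> carrier_mat n n" and G_inverse: "G * (X * transpose_mat X) = 1\<^sub>m n"
    "X * transpose_mat X * G = 1\<^sub>m n"
    using mat_inverse(2)[OF _ G] X_carrier by auto
  have "vnorm (tail_vec n (transpose_mat V *\<^sub>v w)) = vnorm ((1\<^sub>m p - transpose_mat X * G * X) *\<^sub>v w)"
    using projection_eq_tail[OF G_carrier G_inverse(1) w] vnorm_orthonormal_mult[OF V] V_carrier w
    unfolding tail_vec_def by simp
  moreover have "vnorm (diag_pinv D *\<^sub>v (transpose_mat U *\<^sub>v y)) = vnorm (transpose_mat X *\<^sub>v (G *\<^sub>v y))"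
    using min_norm_solution_eq_pinv[OF G_carrier G_inverse(1) y] vnorm_orthonormal_mult[OF V]
      diag_pinv_carrier U_carrier y by simp
  ultimately show ?thesis
    using min_norm_plus_alpha_projection_unique_solution[OF X_carrier G_carrier G_inverse(2) y w refl refl refl]
    unfolding Let_def G by simp
qed

end
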